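(* If $M$ is an irreducible finite-dimensional graded ${}^\theta\mathbf R_m$-module, then for every sequence $\mathbf i$ one has ${\rm gdim}(1_{\mathbf i}M)\in v\,\mathbb Z[v^2,v^{-2}]\cup\mathbb Z[v^2,v^{-2}]$.
   Context: Let $\mathbf k$ be an algebraically closed field of characteristic $0$. Fix $p,q\in\mathbf k^\times$ with $p\ne\pm1$, and $I\subset\mathbf k^\times$ with $1,-1\notin I$, stable under $z\mapsto p^{\pm2}z$ and $z\mapsto z^{-1}$. Let $h_{i,j}=1$ if $i=p^2j$ and $0$ otherwise, $i\cdot j=-h_{i,j}-h_{j,i}$ ($i\ne j$), $i\cdot i=2$, $\theta(i)=i^{-1}$, $\lambda_i=1$ if $i\in\{q,-q\}$ and $0$ otherwise, $Q_{i,j}(u,v)=(-1)^{h_{i,j}}(u-v)^{-i\cdot j}$ ($i\ne j$), $Q_{i,i}=0$. For $\nu\in\mathbb NI$ with $\nu_{\theta(i)}=\nu_i$, $\sum\nu_i=2m$, ${}^\theta I^\nu$ is the set of $\mathbf i=(i_{1-m},\dots,i_m)\in I^{2m}$ with $i_{1-l}=\theta(i_l)$ and $\#\{l:i_l=i\}=\nu_i$. $W_m=\mathfrak S_m\ltimes(\mathbb Z/2)^m$ acts on $\{1-m,\dots,m\}$ by permutations commuting with $l\mapsto1-l$ ($\varepsilon_l$ exchanges $l,1-l$; $s_k$ the transposition of $k,k+1$) and on sequences by $(w\mathbf i)_l=i_{w^{-1}(l)}$. The graded algebra ${}^\theta\mathbf R_{\lambda,\nu}$ ($m\ge1$) is generated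 by $1_{\mathbf i}$, $\varkappa_l$ ($1\le l\le m$), $\sigma_k$ ($1\le k\le m-1$), $\pi_1$, with $1=\sum1_{\mathbf i}$, $\varkappa_{1-l}:=-\varkappa_l$, and relations: $1_{\mathbf i}1_{\mathbf i'}=\delta_{\mathbf i,\mathbf i'}1_{\mathbf i}$, $\sigma_k1_{\mathbf i}=1_{s_k\mathbf i}\sigma_k$, $\varkappa_l1_{\mathbf i}=1_{\mathbf i}\varkappa_l$, $\pi_11_{\mathbf i}=1_{\varepsilon_1\mathbf i}\pi_1$; $\varkappa$'s commute, $\pi_1\varkappa_l=\varkappa_{\varepsilon_1(l)}\pi_1$; $\sigma_k^21_{\mathbf i}=Q_{i_k,i_{k+1}}(\varkappa_{k+1},\varkappa_k)1_{\mathbf i}$, $\pi_1^21_{\mathbf i}=\varkappa_0^{\lambda_{i_0}}\varkappa_1^{\lambda_{i_1}}1_{\mathbf i}$; $\sigma_k\sigma_{k'}=\sigma_{k'}\sigma_k$ ($|k-k'|\ne1$), $\pi_1\sigma_k=\sigma_k\pi_1$ ($k\ne1$); $(\sigma_1\pi_1)^21_{\mathbf i}=(\pi_1\sigma_1)^21_{\mathbf i}+\delta_{i_0,i_2}(-1)^{\lambda_{i_2}}\frac{\varkappa_0^{\lambda_{i_1}+\lambda_{i_2}}-\varkappa_2^{\lambda_{i_1}+\lambda_{i_2}}}{\varkappa_0-\varkappa_2}\sigma_11_{\mathbf i}$; $(\sigma_{k+1}\sigma_k\sigma_{k+1}-\sigma_k\sigma_{k+1}\sigma_k)1_{\mathbf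 i}=\delta_{i_k,i_{k+2}}\frac{Q_{i_k,i_{k+1}}(\varkappa_{k+1},\varkappa_k)-Q_{i_k,i_{k+1}}(\varkappa_{k+1},\varkappa_{k+2})}{\varkappa_k-\varkappa_{k+2}}1_{\mathbf i}$; $(\sigma_k\varkappa_l-\varkappa_{s_k(l)}\sigma_k)1_{\mathbf i}$ is $-1_{\mathbf i}$ if $l=k$, $i_k=i_{k+1}$, is $1_{\mathbf i}$ if $l=k+1$, $i_k=i_{k+1}$, and $0$ otherwise. Grading: $\deg1_{\mathbf i}=0$, $\deg\varkappa_l=2$, $\deg(\pi_11_{\mathbf i})=\lambda_{i_0}+\lambda_{i_1}$, $\deg(\sigma_k1_{\mathbf i})=-i_k\cdot i_{k+1}$. ${}^\theta\mathbf R_m=\bigoplus_{\nu:\sum\nu_i=2m}{}^\theta\mathbf R_{\lambda,\nu}$, ${}^\theta\mathbf R_0=\mathbf k$. For a graded vector space $N$, ${\rm gdim}\,N=\sum_dv^d\dim N_d$. *)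

theory Defs
  imports "HOL-Computational_Algebra.Polynomial"
begin

definition hh :: "'k::field \<Rightarrow> 'k \<Rightarrow> 'k \<Rightarrow> nat" where
  "hh p i j = (if i = p^2 * j then 1 else 0)"

definition cdot :: "'k::field \<Rightarrow> 'k \<Rightarrow> 'k \<Rightarrow> int" where
  "cdot p i j = (if i = j then 2 else - int (hh p i j) - int (hh p j i))"

definition lam :: "'k::field \<Rightarrow> 'k \<Rightarrow> nat" where
  "lam q i = (if i = q \<or> i = - q then 1 else 0)"

text \<open>A sequence (i_{1-m},...,i_m) with i_{1-l} = theta(i_l) = i_l^{-1} is
  determined by the list [i_1,...,i_m]; the entry i_l (for 1-m \<le> l \<le> m) is:\<close>
definition ix :: "'k::field list \<Rightarrow> int \<Rightarrow> 'k" where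
  "ix i l = (if l \<ge> 1 then i ! (nat l - 1) else inverse (i ! nat (- l)))"

text \<open>The set of all sequences in the union over nu of theta-I^nu (sum nu_i = 2m).\<close>
definition seqs :: "'k set \<Rightarrow> nat \<Rightarrow> 'k list set" where
  "seqs I m = {i. length i = m \<and> set i \<subseteq> I}"

definition sk_seq :: "nat \<Rightarrow> 'k list \<Rightarrow> 'k list" where
  "sk_seq k i = i[k - 1 := i ! k, k := i ! (k - 1)]"

definition eps1_seq :: "'k::field list \<Rightarrow> 'k list" where
  "eps1_seq i = i[0 := inverse (i ! 0)]"

definition sk_pos :: "nat \<Rightarrow> nat \<Rightarrow> nat" where
  "sk_pos k l = (if l = k then k + 1 else if l = k + 1 then k else l)"

definition eps1_pos :: "int \<Rightarrow> int" where
  "eps1_pos l = (if l = 1 then 0 else if l = 0 then 1 else l)"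

text \<open>kappa_l as an operator for every l in {1-m..m}, using kappa_{1-l} = - kappa_l.\<close>
definition Xop :: "(nat \<Rightarrow> 'v \<Rightarrow> 'v::ab_group_add) \<Rightarrow> int \<Rightarrow> 'v \<Rightarrow> 'v" where
  "Xop x l = (if l \<ge> 1 then x (nat l) else (\<lambda>v. - x (nat (1 - l)) v))"

definition opminus :: "('v \<Rightarrow> 'v::ab_group_add) \<Rightarrow> ('v \<Rightarrow> 'v) \<Rightarrow> 'v \<Rightarrow> 'v" where
  "opminus A B = (\<lambda>v. A v - B v)"

text \<open>The divided difference (A^n - B^n)/(A - B) = sum_{j<n} A^j B^{n-1-j}
  for commuting operators A, B.\<close>
definition ddiff :: "nat \<Rightarrow> ('v \<Rightarrow> 'v::ab_group_add) \<Rightarrow> ('v \<Rightarrow> 'v) \<Rightarrow> 'v \<Rightarrow> 'v" where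
  "ddiff n A B = (\<lambda>v. \<Sum>j<n. (A ^^ j) ((B ^^ (n - 1 - j)) v))"

definition Qop :: "('k::field \<Rightarrow> 'v \<Rightarrow> 'v::ab_group_add) \<Rightarrow> 'k \<Rightarrow> 'k \<Rightarrow> 'k
      \<Rightarrow> ('v \<Rightarrow> 'v) \<Rightarrow> ('v \<Rightarrow> 'v) \<Rightarrow> 'v \<Rightarrow> 'v" where
  "Qop sc p i j U V = (if i = j then (\<lambda>v. 0)
     else (\<lambda>v. sc ((-1) ^ hh p i j) ((opminus U V ^^ nat (- cdot p i j)) v)))"

text \<open>(Q_{i,j}(U,A) - Q_{i,j}(U,B)) / (A - B).  Writing Y = U - A, Z = U - B
  (so A - B = Z - Y) this is -(-1)^{h_{i,j}} (Y^n - Z^n)/(Y - Z).\<close>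
definition Qdiv :: "('k::field \<Rightarrow> 'v \<Rightarrow> 'v::ab_group_add) \<Rightarrow> 'k \<Rightarrow> 'k \<Rightarrow> 'k
      \<Rightarrow> ('v \<Rightarrow> 'v) \<Rightarrow> ('v \<Rightarrow> 'v) \<Rightarrow> ('v \<Rightarrow> 'v) \<Rightarrow> 'v \<Rightarrow> 'v" where
  "Qdiv sc p i j U A B = (if i = j then (\<lambda>v. 0)
     else (\<lambda>v. - sc ((-1) ^ hh p i j)
                 (ddiff (nat (- cdot p i j)) (opminus U A) (opminus U B) v)))"

definition graded_vs :: "('k::field \<Rightarrow> 'v \<Rightarrow> 'v::ab_group_add) \<Rightarrow> (int \<Rightarrow> 'v set) \<Rightarrow> bool" where
  "graded_vs sc G \<longleftrightarrow> vector_space sc \<and> (\<forall>d. module.subspace sc (G d)) \<and>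
     (\<forall>v. \<exists>!c. finite {d. c d \<noteq> 0} \<and> (\<forall>d. c d \<in> G d) \<and> v = (\<Sum>d\<in>{d. c d \<noteq> 0}. c d))"

definition homog :: "(int \<Rightarrow> 'v set) \<Rightarrow> int \<Rightarrow> ('v \<Rightarrow> 'v) \<Rightarrow> bool" where
  "homog G a f \<longleftrightarrow> (\<forall>d. f ` G d \<subseteq> G (d + a))"

definition fin_dim :: "('k::field \<Rightarrow> 'v \<Rightarrow> 'v::ab_group_add) \<Rightarrow> bool" where
  "fin_dim sc \<longleftrightarrow> (\<exists>B. finite B \<and> module.span sc B = UNIV)"

text \<open>Graded dimension of a graded subspace N, as its coefficient function:
  gdim N = sum_d v^d dim (N \<inter> G d).\<close>
definition gdim :: "('k::field \<Rightarrow> 'v \<Rightarrow> 'v::ab_group_add) \<Rightarrow> (int \<Rightarrow> 'v set) \<Rightarrow> 'v set \<Rightarrow> int \<Rightarrow> nat" where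
  "gdim sc G N = (\<lambda>d. vector_space.dim sc (N \<inter> G d))"

text \<open>Laurent polynomials (given by coefficient functions) in Z[v^2,v^-2] and in v Z[v^2,v^-2].\<close>
definition in_Zv2 :: "(int \<Rightarrow> nat) \<Rightarrow> bool" where
  "in_Zv2 f \<longleftrightarrow> finite {d. f d \<noteq> 0} \<and> (\<forall>d. odd d \<longrightarrow> f d = 0)"

definition in_vZv2 :: "(int \<Rightarrow> nat) \<Rightarrow> bool" where
  "in_vZv2 f \<longleftrightarrow> finite {d. f d \<noteq> 0} \<and> (\<forall>d. even d \<longrightarrow> f d = 0)"

text \<open>A graded theta-R_m-module structure on the graded vector space (sc, G):
  e i = action of 1_i, x l = action of kappa_l (1 \<le> l \<le> m), s k = action of
  sigma_k (1 \<le> k \<le> m-1), pi1 = action of pi_1 (only for m \<ge> 1).  For m = 0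
  the algebra is k, generated by the single idempotent 1_{()} = 1.\<close>
definition thetaR_module ::
  "'k::field \<Rightarrow> 'k \<Rightarrow> 'k set \<Rightarrow> nat \<Rightarrow> ('k \<Rightarrow> 'v \<Rightarrow> 'v::ab_group_add) \<Rightarrow> (int \<Rightarrow> 'v set)
   \<Rightarrow> ('k list \<Rightarrow> 'v \<Rightarrow> 'v) \<Rightarrow> (nat \<Rightarrow> 'v \<Rightarrow> 'v) \<Rightarrow> (nat \<Rightarrow> 'v \<Rightarrow> 'v) \<Rightarrow> ('v \<Rightarrow> 'v) \<Rightarrow> bool" where
  "thetaR_module p q I m sc G e x s pi1 \<longleftrightarrow>
    graded_vs sc G \<and>
    \<comment> \<open>linearity\<close>
    (\<forall>i\<in>seqs I m. Vector_Spaces.linear sc sc (e i)) \<and>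
    (\<forall>l. 1 \<le> l \<and> l \<le> m \<longrightarrow> Vector_Spaces.linear sc sc (x l)) \<and>
    (\<forall>k. 1 \<le> k \<and> k < m \<longrightarrow> Vector_Spaces.linear sc sc (s k)) \<and>
    (1 \<le> m \<longrightarrow> Vector_Spaces.linear sc sc pi1) \<and>
    \<comment> \<open>grading\<close>
    (\<forall>i\<in>seqs I m. homog G 0 (e i)) \<and>
    (\<forall>l. 1 \<le> l \<and> l \<le> m \<longrightarrow> homog G 2 (x l)) \<and>
    (\<forall>k i. 1 \<le> k \<and> k < m \<and> i \<in> seqs I m \<longrightarrow>
        homog G (- cdot p (ix i k) (ix i (k + 1))) (s k \<circ> e i)) \<and>
    (\<forall>i\<in>seqs I m. 1 \<le> m \<longrightarrow> homog G (int (lam q (ix i 0) + lam q (ix i 1))) (pi1 \<circ> e i)) \<and>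
    \<comment> \<open>idempotents: orthogonal, and 1 = sum of the 1_i\<close>
    (\<forall>i\<in>seqs I m. \<forall>j\<in>seqs I m. e i \<circ> e j = (if i = j then e i else (\<lambda>v. 0))) \<and>
    finite {i\<in>seqs I m. e i \<noteq> (\<lambda>v. 0)} \<and>
    (\<forall>v. v = (\<Sum>i\<in>{i\<in>seqs I m. e i \<noteq> (\<lambda>v. 0)}. e i v)) \<and>
    \<comment> \<open>commutation with idempotents\<close>
    (\<forall>k i. 1 \<le> k \<and> k < m \<and> i \<in> seqs I m \<longrightarrow> s k \<circ> e i = e (sk_seq k i) \<circ> s k) \<and>
    (\<forall>l i. 1 \<le> l \<and> l \<le> m \<and> i \<in> seqs I m \<longrightarrow> x l \<circ> e i = e i \<circ> x l) \<and>
    (\<forall>i\<in>seqs I m. 1 \<le> m \<longrightarrow> pi1 \<circ> e i = e (eps1_seq i) \<circ> pi1) \<and>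
    \<comment> \<open>the kappa's commute; pi_1 kappa_l = kappa_{eps_1(l)} pi_1\<close>
    (\<forall>l l'. 1 \<le> l \<and> l \<le> m \<and> 1 \<le> l' \<and> l' \<le> m \<longrightarrow> x l \<circ> x l' = x l' \<circ> x l) \<and>
    (\<forall>l. 1 \<le> l \<and> l \<le> m \<longrightarrow> pi1 \<circ> x l = Xop x (eps1_pos (int l)) \<circ> pi1) \<and>
    \<comment> \<open>quadratic relations\<close>
    (\<forall>k i. 1 \<le> k \<and> k < m \<and> i \<in> seqs I m \<longrightarrow>
        s k \<circ> s k \<circ> e i = Qop sc p (ix i k) (ix i (k + 1)) (x (k + 1)) (x k) \<circ> e i) \<and>
    (\<forall>i\<in>seqs I m. 1 \<le> m \<longrightarrow>
        pi1 \<circ> pi1 \<circ> e i = (Xop x 0 ^^ lam q (ix i 0)) \<circ> (Xop x 1 ^^ lam q (ix i 1)) \<circ> e i) \<and>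
    \<comment> \<open>commutations of far generators\<close>
    (\<forall>k k'. 1 \<le> k \<and> k < m \<and> 1 \<le> k' \<and> k' < m \<and> \<bar>int k - int k'\<bar> \<noteq> 1 \<longrightarrow>
        s k \<circ> s k' = s k' \<circ> s k) \<and>
    (\<forall>k. 1 < k \<and> k < m \<longrightarrow> pi1 \<circ> s k = s k \<circ> pi1) \<and>
    \<comment> \<open>type B braid relation\<close>
    (\<forall>i\<in>seqs I m. 2 \<le> m \<longrightarrow>
        (\<forall>v. (s 1 \<circ> pi1 \<circ> s 1 \<circ> pi1 \<circ> e i) v =
             (pi1 \<circ> s 1 \<circ> pi1 \<circ> s 1 \<circ> e i) v +
             (if ix i 0 = ix i 2
              then sc ((-1) ^ lam q (ix i 2))
                     (ddiff (lam q (ix i 1) + lam q (ix i 2)) (Xop x 0) (Xop x 2) (s 1 (e i v)))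
              else 0))) \<and>
    \<comment> \<open>type A braid relation\<close>
    (\<forall>k i. 1 \<le> k \<and> k + 2 \<le> m \<and> i \<in> seqs I m \<longrightarrow>
        (\<forall>v. (s (k + 1) \<circ> s k \<circ> s (k + 1) \<circ> e i) v - (s k \<circ> s (k + 1) \<circ> s k \<circ> e i) v =
             (if ix i k = ix i (k + 2)
              then Qdiv sc p (ix i k) (ix i (k + 1)) (x (k + 1)) (x k) (x (k + 2)) (e i v)
              else 0))) \<and>
    \<comment> \<open>sigma_k kappa_l - kappa_{s_k(l)} sigma_k\<close>
    (\<forall>k l i. 1 \<le> k \<and> k < m \<and> 1 \<le> l \<and> l \<le> m \<and> i \<in> seqs I m \<longrightarrow>
        (\<forall>v. (s k \<circ> x l \<circ> e i) v - (x (sk_pos k l) \<circ> s k \<circ> e i) v =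
             (if l = k \<and> ix i k = ix i (k + 1) then - e i v
              else if l = k + 1 \<and> ix i k = ix i (k + 1) then e i v
              else 0)))"

definition graded_submodule ::
  "'k::field set \<Rightarrow> nat \<Rightarrow> ('k \<Rightarrow> 'v \<Rightarrow> 'v::ab_group_add) \<Rightarrow> (int \<Rightarrow> 'v set)
   \<Rightarrow> ('k list \<Rightarrow> 'v \<Rightarrow> 'v) \<Rightarrow> (nat \<Rightarrow> 'v \<Rightarrow> 'v) \<Rightarrow> (nat \<Rightarrow> 'v \<Rightarrow> 'v) \<Rightarrow> ('v \<Rightarrow> 'v)
   \<Rightarrow> 'v set \<Rightarrow> bool" where
  "graded_submodule I m sc G e x s pi1 N \<longleftrightarrow>
    module.subspace sc N \<and>
    (\<forall>i\<in>seqs I m. e i ` N \<subseteq> N) \<and>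
    (\<forall>l. 1 \<le> l \<and> l \<le> m \<longrightarrow> x l ` N \<subseteq> N) \<and>
    (\<forall>k. 1 \<le> k \<and> k < m \<longrightarrow> s k ` N \<subseteq> N) \<and>
    (1 \<le> m \<longrightarrow> pi1 ` N \<subseteq> N) \<and>
    (\<forall>v\<in>N. \<forall>c. finite {d. c d \<noteq> 0} \<and> (\<forall>d. c d \<in> G d) \<and> v = (\<Sum>d\<in>{d. c d \<noteq> 0}. c d)
        \<longrightarrow> (\<forall>d. c d \<in> N))"

definition irreducible_graded ::
  "'k::field set \<Rightarrow> nat \<Rightarrow> ('k \<Rightarrow> 'v \<Rightarrow> 'v::ab_group_add) \<Rightarrow> (int \<Rightarrow> 'v set)
   \<Rightarrow> ('k list \<Rightarrow> 'v \<Rightarrow> 'v) \<Rightarrow> (nat \<Rightarrow> 'v \<Rightarrow> 'v) \<Rightarrow> (nat \<Rightarrow> 'v \<Rightarrow> 'v) \<Rightarrow> ('v \<Rightarrow> 'v) \<Rightarrow> bool" where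
  "irreducible_graded I m sc G e x s pi1 \<longleftrightarrow>
    (UNIV :: 'v set) \<noteq> {0} \<and>
    (\<forall>N. graded_submodule I m sc G e x s pi1 N \<longrightarrow> N = {0} \<or> N = UNIV)"

end

theory Submission
  imports Defs
begin

text \<open>Attach to each sequence \<open>j\<close> an integer weight \<open>seq_weight p q j\<close> such that every
  generator of \<open>\<^sup>\<theta>R\<^sub>m\<close> carrying \<open>1\<^sub>j\<^sub>0 M\<close> to \<open>1\<^sub>j M\<close> has degree congruent to
  \<open>seq_weight p q j - seq_weight p q j\<^sub>0\<close> modulo 2: for \<open>\<sigma>\<^sub>k\<close> this is the parity of
  \<open>i\<^sub>k \<cdot> i\<^sub>k\<^sub>+\<^sub>1\<close>, for \<open>\<pi>\<^sub>1\<close> that of \<open>\<lambda>\<^sub>i\<^sub>0 + \<lambda>\<^sub>i\<^sub>1\<close>, and \<open>\<kappa>\<^sub>l\<close> has degree 2.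
  Then, for either parity \<open>\<epsilon>\<close>, the vectors \<open>v\<close> all of whose components \<open>1\<^sub>j v\<close> sit in degrees
  \<open>d\<close> with \<open>d + seq_weight p q j \<equiv> \<epsilon>\<close> form a graded submodule.  A nonzero homogeneous vector of
  some \<open>1\<^sub>j M\<close> lies in one of them, so by irreducibility that one is all of \<open>M\<close>, and every
  \<open>1\<^sub>i M\<close> is concentrated in degrees of a single parity.\<close>

definition graded_decomposition :: "(int \<Rightarrow> 'v::ab_group_add set) \<Rightarrow> 'v \<Rightarrow> (int \<Rightarrow> 'v) \<Rightarrow> bool" where
  "graded_decomposition G v c \<longleftrightarrow>
     finite {d. c d \<noteq> 0} \<and> (\<forall>d. c d \<in> G d) \<and> v = (\<Sum>d\<in>{d. c d \<noteq> 0}. c d)"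

definition graded_component :: "(int \<Rightarrow> 'v::ab_group_add set) \<Rightarrow> 'v \<Rightarrow> int \<Rightarrow> 'v" where
  "graded_component G v = (THE c. graded_decomposition G v c)"

lemma graded_decompositionI:
  assumes "finite S" "{d. c d \<noteq> 0} \<subseteq> S" "\<And>d. c d \<in> G d" "v = sum c S"
  shows "graded_decomposition G v c"
proof -
  have "sum c {d. c d \<noteq> 0} = sum c S"
    by (rule sum.mono_neutral_left[OF assms(1,2)]) auto
  then show ?thesis
    unfolding graded_decomposition_def using assms finite_subset[OF assms(2)] by auto
qed

locale graded_space =
  fixes sc :: "'k::field \<Rightarrow> 'v::ab_group_add \<Rightarrow> 'v" and G :: "int \<Rightarrow> 'v set"
  assumes graded: "graded_vs sc G"
begin

sublocale vector_space sc
  using graded unfolding graded_vs_def by blast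

lemma subspace_degree: "subspace (G d)"
  using graded unfolding graded_vs_def by blast

lemma ex1_graded_decomposition: "\<exists>!c. graded_decomposition G v c"
  using graded unfolding graded_vs_def graded_decomposition_def by blast

lemma graded_decomposition_component: "graded_decomposition G v (graded_component G v)"
  unfolding graded_component_def by (rule theI'[OF ex1_graded_decomposition])

lemma graded_component_unique: "graded_decomposition G v c \<Longrightarrow> graded_component G v = c"
  unfolding graded_component_def by (rule the1_equality[OF ex1_graded_decomposition])

lemma graded_component_in: "graded_component G v d \<in> G d"
  using graded_decomposition_component unfolding graded_decomposition_def by blast

lemma finite_graded_component_support: "finite {d. graded_component G v d \<noteq> 0}"
  using graded_decomposition_component unfolding graded_decomposition_def by blast

lemma sum_graded_components: "(\<Sum>d\<in>{d. graded_component G v d \<noteq> 0}. graded_component G v d) = v"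
  using graded_decomposition_component unfolding graded_decomposition_def by metis

lemma graded_component_homogeneous:
  assumes "v \<in> G d\<^sub>0"
  shows "graded_component G v = (\<lambda>d. if d = d\<^sub>0 then v else 0)"
  by (rule graded_component_unique, rule graded_decompositionI[of "{d\<^sub>0}"])
    (use assms subspace_0[OF subspace_degree] in auto)

lemma graded_component_zero: "graded_component G 0 = (\<lambda>d. 0)"
  using graded_component_homogeneous[OF subspace_0[OF subspace_degree]] by simp

lemma sum_graded_components_superset:
  assumes "finite S" "{d. graded_component G v d \<noteq> 0} \<subseteq> S"
  shows "sum (graded_component G v) S = v"
proof -
  have "sum (graded_component G v) S = sum (graded_component G v) {d. graded_component G v d \<noteq> 0}"
    by (rule sum.mono_neutral_left[symmetric, OF assms(1,2)]) auto
  then show ?thesis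
    by (simp add: sum_graded_components)
qed

lemma graded_component_add:
  "graded_component G (u + w) d = graded_component G u d + graded_component G w d"
proof -
  let ?S = "{d. graded_component G u d \<noteq> 0} \<union> {d. graded_component G w d \<noteq> 0}"
  have fin: "finite ?S"
    using finite_graded_component_support by blast
  have "graded_decomposition G (u + w)
      (\<lambda>d. graded_component G u d + graded_component G w d)"
    by (intro graded_decompositionI[OF fin])
      (auto simp: sum.distrib subspace_add[OF subspace_degree] graded_component_in
        sum_graded_components_superset[OF fin])
  then show ?thesis
    by (simp add: graded_component_unique)
qed

lemma graded_component_scale: "graded_component G (sc r u) d = sc r (graded_component G u d)"
proof -
  have "graded_decomposition G (sc r u) (\<lambda>d. sc r (graded_component G u d))"
    by (rule graded_decompositionI[OF finite_graded_component_support])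
      (auto simp: subspace_scale[OF subspace_degree] graded_component_in
        scale_sum_right[symmetric] sum_graded_components)
  then show ?thesis
    by (simp add: graded_component_unique)
qed

lemma graded_component_sum:
  "finite A \<Longrightarrow> graded_component G (\<Sum>x\<in>A. f x) d = (\<Sum>x\<in>A. graded_component G (f x) d)"
  by (induction A rule: finite_induct) (simp_all add: graded_component_zero graded_component_add)

lemma graded_component_homog_map:
  assumes f: "Vector_Spaces.linear sc sc f" and hom: "homog G a f"
  shows "graded_component G (f v) d = f (graded_component G v (d - a))"
proof -
  let ?S = "{d. graded_component G v d \<noteq> 0}"
  have fin: "finite ?S"
    by (rule finite_graded_component_support)
  have image: "graded_component G (f (graded_component G v d')) d =
      (if d' = d - a then f (graded_component G v d') else 0)" for d'
  proof -
    have "f (graded_component G v d') \<in> G (d' + a)"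
      using hom graded_component_in unfolding homog_def by blast
    then show ?thesis
      by (auto simp: graded_component_homogeneous)
  qed
  have "graded_component G (f v) d = graded_component G (\<Sum>d'\<in>?S. f (graded_component G v d')) d"
    using module_hom.sum[OF module_hom_linearI[OF f]] sum_graded_components by metis
  also have "\<dots> = (\<Sum>d'\<in>?S. if d' = d - a then f (graded_component G v d') else 0)"
    by (simp add: graded_component_sum[OF fin] image)
  also have "\<dots> = f (graded_component G v (d - a))"
    using module_hom.zero[OF module_hom_linearI[OF f]] by (simp add: sum.delta[OF fin])
  finally show ?thesis .
qed

lemma finite_nonzero_degrees:
  assumes "fin_dim sc"
  shows "finite {d. \<exists>w\<in>G d. w \<noteq> 0}"
proof -
  obtain B where B: "finite B" "span B = UNIV"
    using assms unfolding fin_dim_def by blast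
  have "{d. \<exists>w\<in>G d. w \<noteq> 0} \<subseteq> (\<Union>b\<in>B. {d. graded_component G b d \<noteq> 0})"
  proof
    fix d assume "d \<in> {d. \<exists>w\<in>G d. w \<noteq> 0}"
    then obtain w where w: "w \<in> G d" "w \<noteq> 0"
      by blast
    obtain u where "w = (\<Sum>b\<in>B. sc (u b) b)"
      using B span_finite[OF B(1)] by auto
    then have "w = graded_component G (\<Sum>b\<in>B. sc (u b) b) d"
      using w(1) by (simp add: graded_component_homogeneous)
    then have "(\<Sum>b\<in>B. sc (u b) (graded_component G b d)) = w"
      by (simp add: graded_component_sum[OF B(1)] graded_component_scale)
    with w(2) obtain b where "b \<in> B" "sc (u b) (graded_component G b d) \<noteq> 0"
      by (meson sum.neutral)
    then show "d \<in> (\<Union>b\<in>B. {d. graded_component G b d \<noteq> 0})"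
      by auto
  qed
  moreover have "finite (\<Union>b\<in>B. {d. graded_component G b d \<noteq> 0})"
    using B(1) finite_graded_component_support by blast
  ultimately show ?thesis
    by (rule finite_subset)
qed

lemma gdim_eq_0:
  assumes "N \<inter> G d \<subseteq> {0}"
  shows "gdim sc G N d = 0"
proof -
  have "dim (N \<inter> G d) \<le> card ({} :: 'v set)"
    by (rule dim_le_card) (use assms in \<open>simp_all add: span_empty\<close>)
  then show ?thesis
    by (simp add: gdim_def)
qed

lemma finite_gdim_support:
  assumes "fin_dim sc"
  shows "finite {d. gdim sc G N d \<noteq> 0}"
proof (rule finite_subset[OF _ finite_nonzero_degrees[OF assms]])
  show "{d. gdim sc G N d \<noteq> 0} \<subseteq> {d. \<exists>w\<in>G d. w \<noteq> 0}"
  proof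
    fix d assume "d \<in> {d. gdim sc G N d \<noteq> 0}"
    then have "\<not> N \<inter> G d \<subseteq> {0}"
      using gdim_eq_0 by auto
    then show "d \<in> {d. \<exists>w\<in>G d. w \<noteq> 0}"
      by auto
  qed
qed

end

lemma homog_comp: "homog G a f \<Longrightarrow> homog G b g \<Longrightarrow> homog G (a + b) (g \<circ> f)"
  unfolding homog_def by (fastforce simp: add.assoc)

locale homogeneous_idempotents = graded_space sc G
  for sc :: "'k::field \<Rightarrow> 'v::ab_group_add \<Rightarrow> 'v" and G +
  fixes J :: "'j set" and e :: "'j \<Rightarrow> 'v \<Rightarrow> 'v"
  assumes linear_idem: "j \<in> J \<Longrightarrow> Vector_Spaces.linear sc sc (e j)"
    and homog_idem: "j \<in> J \<Longrightarrow> homog G 0 (e j)"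
    and idem_orthogonal: "i \<in> J \<Longrightarrow> j \<in> J \<Longrightarrow> e i (e j v) = (if i = j then e i v else 0)"
begin

lemma idem_idem: "j \<in> J \<Longrightarrow> e j (e j v) = e j v"
  by (simp add: idem_orthogonal)

lemma idem_zero: "j \<in> J \<Longrightarrow> e j 0 = 0"
  using module_hom.zero[OF module_hom_linearI[OF linear_idem]] .

lemma graded_component_idem: "j \<in> J \<Longrightarrow> graded_component G (e j v) d = e j (graded_component G v d)"
  using graded_component_homog_map[OF linear_idem homog_idem] by simp

lemma exists_homogeneous_fixed_vector:
  assumes "v \<noteq> 0" "K \<subseteq> J" "v = (\<Sum>j\<in>K. e j v)"
  obtains j d w where "j \<in> J" "w \<in> G d" "e j w = w" "w \<noteq> 0"
proof -
  obtain j where j: "j \<in> K" "e j v \<noteq> 0"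
    using assms(1,3) sum.neutral by metis
  obtain d where d: "graded_component G (e j v) d \<noteq> 0"
    using j(2) sum_graded_components[of "e j v"] by fastforce
  have "j \<in> J"
    using j(1) assms(2) by blast
  then have "e j (graded_component G (e j v) d) = graded_component G (e j v) d"
    by (simp add: graded_component_idem idem_idem)
  with \<open>j \<in> J\<close> d show thesis
    using that graded_component_in by blast
qed

definition parity_subspace :: "('j \<Rightarrow> int) \<Rightarrow> bool \<Rightarrow> 'v set" where
  "parity_subspace wt \<epsilon> =
     {v. \<forall>j\<in>J. \<forall>d. even (d + wt j) \<noteq> \<epsilon> \<longrightarrow> graded_component G (e j v) d = 0}"

lemma parity_subspaceD:
  "v \<in> parity_subspace wt \<epsilon> \<Longrightarrow> j \<in> J \<Longrightarrow> even (d + wt j) \<noteq> \<epsilon> \<Longrightarrow>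
    graded_component G (e j v) d = 0"
  unfolding parity_subspace_def by blast

lemma subspace_parity_subspace: "subspace (parity_subspace wt \<epsilon>)"
  unfolding subspace_def parity_subspace_def
  using module_hom.zero[OF module_hom_linearI[OF linear_idem]]
    module_hom.add[OF module_hom_linearI[OF linear_idem]]
    module_hom.scale[OF module_hom_linearI[OF linear_idem]]
  by (simp add: graded_component_zero graded_component_add graded_component_scale)

lemma graded_component_in_parity_subspace:
  assumes "v \<in> parity_subspace wt \<epsilon>"
  shows "graded_component G v d \<in> parity_subspace wt \<epsilon>"
  unfolding parity_subspace_def
proof (intro CollectI ballI allI impI)
  fix j d' assume j: "j \<in> J" and parity: "even (d' + wt j) \<noteq> \<epsilon>"
  have "graded_component G (e j (graded_component G v d)) d' =
      (if d' = d then graded_component G (e j v) d else 0)"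
    using j by (simp add: graded_component_idem graded_component_homogeneous[OF graded_component_in]
        idem_zero)
  then show "graded_component G (e j (graded_component G v d)) d' = 0"
    using parity_subspaceD[OF assms j parity] by (cases "d' = d") simp_all
qed

lemma homogeneous_fixed_in_parity_subspace:
  assumes j: "j \<in> J" and w: "w \<in> G d" "e j w = w"
  shows "w \<in> parity_subspace wt (even (d + wt j))"
  unfolding parity_subspace_def
proof (intro CollectI ballI allI impI)
  fix j' d' assume j': "j' \<in> J" and parity: "even (d' + wt j') \<noteq> even (d + wt j)"
  have "e j' w = (if j' = j then w else 0)"
    using idem_orthogonal[OF j' j, of w] w(2) by (cases "j' = j") simp_all
  then show "graded_component G (e j' w) d' = 0"
    using parity by (auto simp: graded_component_homogeneous[OF w(1)] graded_component_zero)
qed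

lemma parity_subspace_homogeneous_vanishes:
  assumes "u \<in> parity_subspace wt \<epsilon>" "i \<in> J" "e i u = u" "u \<in> G d" "even (d + wt i) \<noteq> \<epsilon>"
  shows "u = 0"
  using parity_subspaceD[OF assms(1,2,5)] assms(3,4) by (simp add: graded_component_homogeneous)

lemma parity_subspace_image:
  assumes f: "Vector_Spaces.linear sc sc f"
    and src: "\<And>j. j \<in> J \<Longrightarrow> src j \<in> J"
    and intertwines: "\<And>j v. j \<in> J \<Longrightarrow> e j (f v) = f (e (src j) v)"
    and shift: "\<And>j. j \<in> J \<Longrightarrow> homog G (deg (src j)) (f \<circ> e (src j))"
    and parity: "\<And>j. j \<in> J \<Longrightarrow> even (wt j - wt (src j) - deg (src j))"
  shows "f ` parity_subspace wt \<epsilon> \<subseteq> parity_subspace wt \<epsilon>"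
proof clarify
  fix v assume v: "v \<in> parity_subspace wt \<epsilon>"
  show "f v \<in> parity_subspace wt \<epsilon>"
    unfolding parity_subspace_def
  proof (intro CollectI ballI allI impI)
    fix j d assume j: "j \<in> J" and bad: "even (d + wt j) \<noteq> \<epsilon>"
    define j\<^sub>0 where "j\<^sub>0 = src j"
    have j\<^sub>0: "j\<^sub>0 \<in> J"
      using src[OF j] by (simp add: j\<^sub>0_def)
    have lin: "Vector_Spaces.linear sc sc (f \<circ> e j\<^sub>0)"
      by (rule Vector_Spaces.linear_compose[OF linear_idem[OF j\<^sub>0] f])
    have "even (d - deg j\<^sub>0 + wt j\<^sub>0) \<longleftrightarrow> even (d + wt j)"
      using parity[OF j] unfolding j\<^sub>0_def by presburger
    with bad have "even (d - deg j\<^sub>0 + wt j\<^sub>0) \<noteq> \<epsilon>"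
      by simp
    then have "graded_component G (e j\<^sub>0 v) (d - deg j\<^sub>0) = 0"
      by (rule parity_subspaceD[OF v j\<^sub>0])
    moreover have "e j (f v) = (f \<circ> e j\<^sub>0) (e j\<^sub>0 v)"
      using intertwines[OF j] idem_idem[OF j\<^sub>0] by (simp add: j\<^sub>0_def)
    ultimately show "graded_component G (e j (f v)) d = 0"
      using graded_component_homog_map[OF lin shift[OF j, folded j\<^sub>0_def]]
        module_hom.zero[OF module_hom_linearI[OF lin]] by simp
  qed
qed

lemma idem_image_parity_subspace:
  assumes i: "i \<in> J"
  shows "e i ` parity_subspace wt \<epsilon> \<subseteq> parity_subspace wt \<epsilon>"
proof (rule parity_subspace_image[where src=id and deg="\<lambda>_. 0"])
  show "e j (e i v) = e i (e (id j) v)" if "j \<in> J" for j v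
    using idem_orthogonal[OF i that] idem_orthogonal[OF that i] by simp
  show "homog G ((\<lambda>_. 0) (id j)) (e i \<circ> e (id j))" if "j \<in> J" for j
    using homog_comp[OF homog_idem[OF that] homog_idem[OF i]] by simp
qed (simp_all add: linear_idem i)

lemma graded_decomposition_in_parity_subspace:
  assumes "v \<in> parity_subspace wt \<epsilon>" "graded_decomposition G v c"
  shows "c d \<in> parity_subspace wt \<epsilon>"
  using graded_component_in_parity_subspace[OF assms(1)] graded_component_unique[OF assms(2)]
  by simp

lemma gdim_idem_vanishes:
  assumes everything: "parity_subspace wt \<epsilon> = UNIV"
    and i: "i \<in> J" and parity: "even (d + wt i) \<noteq> \<epsilon>"
  shows "gdim sc G (range (e i)) d = 0"
proof (rule gdim_eq_0, rule subsetI)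
  fix u assume u: "u \<in> range (e i) \<inter> G d"
  then have "e i u = u"
    using idem_idem[OF i] by auto
  with u show "u \<in> {0}"
    using parity_subspace_homogeneous_vanishes[of u wt \<epsilon> i d] everything i parity by auto
qed

end

text \<open>The \<open>inverse a\<close> summand makes \<open>inversion_weight\<close> insensitive to inverting the head
  entry (the action of \<open>\<pi>\<^sub>1\<close>); by \<open>hh_inverse_left\<close> it cancels when neighbours are swapped.\<close>

definition pair_weight :: "'k::field \<Rightarrow> 'k \<Rightarrow> 'k \<Rightarrow> int" where
  "pair_weight p a b = int (hh p a b) + int (hh p (inverse a) b)"

fun inversion_weight :: "'k::field \<Rightarrow> 'k list \<Rightarrow> int" where
  "inversion_weight p [] = 0"
| "inversion_weight p (a # l) = (\<Sum>b\<leftarrow>l. pair_weight p a b) + inversion_weight p l"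

definition seq_weight :: "'k::field \<Rightarrow> 'k \<Rightarrow> 'k list \<Rightarrow> int" where
  "seq_weight p q l = inversion_weight p l + (\<Sum>a\<leftarrow>l. int (lam q a))"

lemma inversion_weight_append:
  "inversion_weight p (xs @ ys) =
     inversion_weight p xs + inversion_weight p ys + (\<Sum>a\<leftarrow>xs. \<Sum>b\<leftarrow>ys. pair_weight p a b)"
  by (induction xs) (simp_all add: algebra_simps)

lemma hh_inverse_left:
  assumes "a \<noteq> 0" "b \<noteq> 0"
  shows "hh p (inverse a) b = hh p (inverse b) a"
proof -
  have "inverse a = p^2 * b \<longleftrightarrow> inverse b = p^2 * a"
    using assms by (auto simp: field_simps)
  then show ?thesis
    by (simp add: hh_def)
qed

lemma seq_weight_swap_parity:
  assumes "a \<noteq> 0" "b \<noteq> 0"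
  shows "even (seq_weight p q (xs @ b # a # ys) - seq_weight p q (xs @ a # b # ys) + cdot p a b)"
proof -
  have "seq_weight p q (xs @ b # a # ys) - seq_weight p q (xs @ a # b # ys) =
      pair_weight p b a - pair_weight p a b"
    by (simp add: seq_weight_def inversion_weight_append algebra_simps)
  also have "\<dots> = int (hh p b a) - int (hh p a b)"
    using hh_inverse_left[OF assms] by (simp add: pair_weight_def)
  finally show ?thesis
    by (simp add: cdot_def)
qed

lemma seq_weight_invert_head_parity:
  "even (seq_weight p q (inverse a # ys) - seq_weight p q (a # ys) - int (lam q (inverse a) + lam q a))"
proof -
  have "pair_weight p (inverse a) = pair_weight p a"
    by (auto simp: pair_weight_def)
  then show ?thesis
    by (simp add: seq_weight_def)
qed

lemma sk_seq_in_seqs: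
  assumes "j \<in> seqs I m" "1 \<le> k" "k < m"
  shows "sk_seq k j \<in> seqs I m"
  using assms by (auto simp: seqs_def sk_seq_def dest!: set_update_subset_insert[THEN subsetD])

lemma sk_seq_sk_seq:
  assumes "length j = m" "1 \<le> k" "k < m"
  shows "sk_seq k (sk_seq k j) = j"
  using assms by (auto simp: sk_seq_def list_eq_iff_nth_eq nth_list_update)

lemma eps1_seq_in_seqs:
  assumes "j \<in> seqs I m" "1 \<le> m" "\<forall>z\<in>I. inverse z \<in> I"
  shows "eps1_seq j \<in> seqs I m"
  using assms by (cases j) (auto simp: seqs_def eps1_seq_def)

lemma eps1_seq_eps1_seq: "eps1_seq (eps1_seq j) = j"
  by (cases j) (simp_all add: eps1_seq_def)

lemma seq_weight_sk_seq_parity: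
  assumes j: "j \<in> seqs I m" and I: "0 \<notin> I" and k: "1 \<le> k" "k < m"
  shows "even (seq_weight p q (sk_seq k j) - seq_weight p q j + cdot p (ix j (int k)) (ix j (int (k + 1))))"
proof -
  have "drop (k - 1) j = j ! (k - 1) # j ! k # drop (Suc k) j"
    using j k Cons_nth_drop_Suc[of "k - 1" j] Cons_nth_drop_Suc[of k j] by (simp add: seqs_def)
  then have "j = take (k - 1) j @ j ! (k - 1) # j ! k # drop (Suc k) j"
    by (metis append_take_drop_id)
  moreover have "length (take (k - 1) j) = k - 1"
    using j k by (simp add: seqs_def)
  ultimately obtain xs a b ys where split: "j = xs @ a # b # ys" and xs: "length xs = k - 1"
    by blast
  have ab: "a \<noteq> 0" "b \<noteq> 0"
    using j I unfolding split seqs_def by auto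
  have sk: "sk_seq k j = xs @ b # a # ys"
    using xs k unfolding split by (cases k) (auto simp: sk_seq_def list_update_append nth_append)
  have ix: "ix j (int k) = a" "ix j (int (k + 1)) = b"
    using xs k unfolding split by (cases k; auto simp: ix_def nth_append nat_add_distrib)+
  show ?thesis
    unfolding sk ix unfolding split by (rule seq_weight_swap_parity[OF ab])
qed

lemma seq_weight_eps1_seq_parity:
  assumes "j \<in> seqs I m" "1 \<le> m"
  shows "even (seq_weight p q (eps1_seq j) - seq_weight p q j - int (lam q (ix j 0) + lam q (ix j 1)))"
  using assms seq_weight_invert_head_parity
  by (cases j) (auto simp: seqs_def eps1_seq_def ix_def)

lemma
  assumes "thetaR_module p q I m sc G e x s pi1"
  shows thetaR_module_graded_vs: "graded_vs sc G"
    and thetaR_module_linear_e: "\<forall>i\<in>seqs I m. Vector_Spaces.linear sc sc (e i)"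
    and thetaR_module_linear_x: "\<forall>l. 1 \<le> l \<and> l \<le> m \<longrightarrow> Vector_Spaces.linear sc sc (x l)"
    and thetaR_module_linear_s: "\<forall>k. 1 \<le> k \<and> k < m \<longrightarrow> Vector_Spaces.linear sc sc (s k)"
    and thetaR_module_linear_pi1: "1 \<le> m \<longrightarrow> Vector_Spaces.linear sc sc pi1"
    and thetaR_module_homog_e: "\<forall>i\<in>seqs I m. homog G 0 (e i)"
    and thetaR_module_homog_x: "\<forall>l. 1 \<le> l \<and> l \<le> m \<longrightarrow> homog G 2 (x l)"
    and thetaR_module_homog_s: "\<forall>k i. 1 \<le> k \<and> k < m \<and> i \<in> seqs I m \<longrightarrow>
        homog G (- cdot p (ix i k) (ix i (k + 1))) (s k \<circ> e i)"
    and thetaR_module_homog_pi1: "\<forall>i\<in>seqs I m. 1 \<le> m \<longrightarrow>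
        homog G (int (lam q (ix i 0) + lam q (ix i 1))) (pi1 \<circ> e i)"
    and thetaR_module_e_orthogonal: "\<forall>i\<in>seqs I m. \<forall>j\<in>seqs I m.
        e i \<circ> e j = (if i = j then e i else (\<lambda>v. 0))"
    and thetaR_module_e_sum: "\<forall>v. v = (\<Sum>i\<in>{i\<in>seqs I m. e i \<noteq> (\<lambda>v. 0)}. e i v)"
    and thetaR_module_s_e: "\<forall>k i. 1 \<le> k \<and> k < m \<and> i \<in> seqs I m \<longrightarrow>
        s k \<circ> e i = e (sk_seq k i) \<circ> s k"
    and thetaR_module_x_e: "\<forall>l i. 1 \<le> l \<and> l \<le> m \<and> i \<in> seqs I m \<longrightarrow> x l \<circ> e i = e i \<circ> x l"
    and thetaR_module_pi1_e: "\<forall>i\<in>seqs I m. 1 \<le> m \<longrightarrow> pi1 \<circ> e i = e (eps1_seq i) \<circ> pi1"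
proof -
  note M = assms[unfolded thetaR_module_def]
  show "graded_vs sc G"
    using M by (elim conjE) assumption
  show "\<forall>i\<in>seqs I m. Vector_Spaces.linear sc sc (e i)"
    using M by (elim conjE) assumption
  show "\<forall>l. 1 \<le> l \<and> l \<le> m \<longrightarrow> Vector_Spaces.linear sc sc (x l)"
    using M by (elim conjE) assumption
  show "\<forall>k. 1 \<le> k \<and> k < m \<longrightarrow> Vector_Spaces.linear sc sc (s k)"
    using M by (elim conjE) assumption
  show "1 \<le> m \<longrightarrow> Vector_Spaces.linear sc sc pi1"
    using M by (elim conjE) assumption
  show "\<forall>i\<in>seqs I m. homog G 0 (e i)"
    using M by (elim conjE) assumption
  show "\<forall>l. 1 \<le> l \<and> l \<le> m \<longrightarrow> homog G 2 (x l)"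
    using M by (elim conjE) assumption
  show "\<forall>k i. 1 \<le> k \<and> k < m \<and> i \<in> seqs I m \<longrightarrow>
        homog G (- cdot p (ix i k) (ix i (k + 1))) (s k \<circ> e i)"
    using M by (elim conjE) assumption
  show "\<forall>i\<in>seqs I m. 1 \<le> m \<longrightarrow>
        homog G (int (lam q (ix i 0) + lam q (ix i 1))) (pi1 \<circ> e i)"
    using M by (elim conjE) assumption
  show "\<forall>i\<in>seqs I m. \<forall>j\<in>seqs I m.
        e i \<circ> e j = (if i = j then e i else (\<lambda>v. 0))"
    using M by (elim conjE) assumption
  show "\<forall>v. v = (\<Sum>i\<in>{i\<in>seqs I m. e i \<noteq> (\<lambda>v. 0)}. e i v)"
    using M by (elim conjE) assumption
  show "\<forall>k i. 1 \<le> k \<and> k < m \<and> i \<in> seqs I m \<longrightarrow>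
        s k \<circ> e i = e (sk_seq k i) \<circ> s k"
    using M by (elim conjE) assumption
  show "\<forall>l i. 1 \<le> l \<and> l \<le> m \<and> i \<in> seqs I m \<longrightarrow> x l \<circ> e i = e i \<circ> x l"
    using M by (elim conjE) assumption
  show "\<forall>i\<in>seqs I m. 1 \<le> m \<longrightarrow> pi1 \<circ> e i = e (eps1_seq i) \<circ> pi1"
    using M by (elim conjE) assumption
qed

lemma thetaR_module_homogeneous_idempotents:
  assumes "thetaR_module p q I m sc G e x s pi1"
  shows "homogeneous_idempotents sc G (seqs I m) e"
proof (intro homogeneous_idempotents.intro homogeneous_idempotents_axioms.intro graded_space.intro)
  show "graded_vs sc G"
    by (rule thetaR_module_graded_vs[OF assms])
  show "Vector_Spaces.linear sc sc (e j)" if "j \<in> seqs I m" for j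
    using thetaR_module_linear_e[OF assms] that by blast
  show "homog G 0 (e j)" if "j \<in> seqs I m" for j
    using thetaR_module_homog_e[OF assms] that by blast
  show "e i (e j v) = (if i = j then e i v else 0)" if "i \<in> seqs I m" "j \<in> seqs I m" for i j v
    using thetaR_module_e_orthogonal[OF assms] that by (metis comp_apply)
qed

locale thetaR_graded_module =
  fixes p q :: "'k::field" and I :: "'k set" and m :: nat
    and sc :: "'k \<Rightarrow> 'v::ab_group_add \<Rightarrow> 'v" and G :: "int \<Rightarrow> 'v set"
    and e :: "'k list \<Rightarrow> 'v \<Rightarrow> 'v" and x s :: "nat \<Rightarrow> 'v \<Rightarrow> 'v" and pi1 :: "'v \<Rightarrow> 'v"
  assumes module: "thetaR_module p q I m sc G e x s pi1"
    and nonzero_labels: "0 \<notin> I"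
    and inverse_closed: "\<forall>z\<in>I. inverse z \<in> I"
begin

sublocale homogeneous_idempotents sc G "seqs I m" e
  by (rule thetaR_module_homogeneous_idempotents[OF module])

lemma x_image_parity_subspace:
  assumes l: "1 \<le> l" "l \<le> m"
  shows "x l ` parity_subspace (seq_weight p q) \<epsilon> \<subseteq> parity_subspace (seq_weight p q) \<epsilon>"
proof (rule parity_subspace_image[where src=id and deg="\<lambda>_. 2"])
  show "Vector_Spaces.linear sc sc (x l)"
    using thetaR_module_linear_x[OF module] l by blast
  show "e j (x l v) = x l (e (id j) v)" if "j \<in> seqs I m" for j v
    using thetaR_module_x_e[OF module] l that by (metis comp_apply id_apply)
  show "homog G ((\<lambda>_. 2) (id j)) (x l \<circ> e (id j))" if "j \<in> seqs I m" for j
    using homog_comp[OF homog_idem[OF that], of 2 "x l"] thetaR_module_homog_x[OF module] l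
    by simp
qed simp_all

lemma s_image_parity_subspace:
  assumes k: "1 \<le> k" "k < m"
  shows "s k ` parity_subspace (seq_weight p q) \<epsilon> \<subseteq> parity_subspace (seq_weight p q) \<epsilon>"
proof (rule parity_subspace_image[where src="sk_seq k"
      and deg="\<lambda>j\<^sub>0. - cdot p (ix j\<^sub>0 (int k)) (ix j\<^sub>0 (int (k + 1)))"])
  show "Vector_Spaces.linear sc sc (s k)"
    using thetaR_module_linear_s[OF module] k by blast
  fix j assume j: "j \<in> seqs I m"
  then show j\<^sub>0: "sk_seq k j \<in> seqs I m"
    using k by (rule sk_seq_in_seqs)
  have involutive: "sk_seq k (sk_seq k j) = j"
    using j k sk_seq_sk_seq[of j m k] by (simp add: seqs_def)
  show "e j (s k v) = s k (e (sk_seq k j) v)" for v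
    using thetaR_module_s_e[OF module] k j\<^sub>0 involutive by (metis comp_apply)
  show "homog G (- cdot p (ix (sk_seq k j) (int k)) (ix (sk_seq k j) (int (k + 1))))
      (s k \<circ> e (sk_seq k j))"
    using thetaR_module_homog_s[OF module] k j\<^sub>0 by blast
  show "even (seq_weight p q j - seq_weight p q (sk_seq k j) -
      - cdot p (ix (sk_seq k j) (int k)) (ix (sk_seq k j) (int (k + 1))))"
    using seq_weight_sk_seq_parity[OF j\<^sub>0 nonzero_labels k, of p q] involutive by simp
qed

lemma pi1_image_parity_subspace:
  assumes m: "1 \<le> m"
  shows "pi1 ` parity_subspace (seq_weight p q) \<epsilon> \<subseteq> parity_subspace (seq_weight p q) \<epsilon>"
proof (rule parity_subspace_image[where src=eps1_seq
      and deg="\<lambda>j\<^sub>0. int (lam q (ix j\<^sub>0 0) + lam q (ix j\<^sub>0 1))"])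
  show "Vector_Spaces.linear sc sc pi1"
    using thetaR_module_linear_pi1[OF module] m by blast
  fix j assume j: "j \<in> seqs I m"
  show j\<^sub>0: "eps1_seq j \<in> seqs I m"
    using eps1_seq_in_seqs[OF j m inverse_closed] .
  show "e j (pi1 v) = pi1 (e (eps1_seq j) v)" for v
    using thetaR_module_pi1_e[OF module] m j\<^sub>0 eps1_seq_eps1_seq[of j] by (metis comp_apply)
  show "homog G (int (lam q (ix (eps1_seq j) 0) + lam q (ix (eps1_seq j) 1)))
      (pi1 \<circ> e (eps1_seq j))"
    using thetaR_module_homog_pi1[OF module] m j\<^sub>0 by blast
  show "even (seq_weight p q j - seq_weight p q (eps1_seq j) -
      int (lam q (ix (eps1_seq j) 0) + lam q (ix (eps1_seq j) 1)))"
    using seq_weight_eps1_seq_parity[OF j\<^sub>0 m, of p q] eps1_seq_eps1_seq[of j] by simp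
qed

lemma graded_submodule_parity_subspace:
  "graded_submodule I m sc G e x s pi1 (parity_subspace (seq_weight p q) \<epsilon>)"
  unfolding graded_submodule_def
  using subspace_parity_subspace idem_image_parity_subspace x_image_parity_subspace
    s_image_parity_subspace pi1_image_parity_subspace graded_decomposition_in_parity_subspace
  by (intro conjI ballI allI impI) (auto simp: graded_decomposition_def)

end

lemma in_vZv2_or_in_Zv2:
  assumes "finite {d. f d \<noteq> 0}" "\<And>d. even d \<noteq> \<epsilon> \<Longrightarrow> f d = 0"
  shows "in_vZv2 f \<or> in_Zv2 f"
  using assms unfolding in_vZv2_def in_Zv2_def by (cases \<epsilon>) auto

theorem lemma8p28:
  fixes p q :: "'k::field_char_0"
    and I :: "'k set"
    and m :: nat
    and sc :: "'k \<Rightarrow> 'v::ab_group_add \<Rightarrow> 'v"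
    and G :: "int \<Rightarrow> 'v set"
    and e :: "'k list \<Rightarrow> 'v \<Rightarrow> 'v"
    and x s :: "nat \<Rightarrow> 'v \<Rightarrow> 'v"
    and pi1 :: "'v \<Rightarrow> 'v"
  assumes alg_closed: "\<forall>P :: 'k poly. degree P > 0 \<longrightarrow> (\<exists>z. poly P z = 0)"
    and p_ne: "p \<noteq> 0" "p \<noteq> 1" "p \<noteq> -1"
    and q_ne: "q \<noteq> 0"
    and I_sub: "I \<subseteq> - {0}" "1 \<notin> I" "-1 \<notin> I"
    and I_stable: "\<forall>z\<in>I. p^2 * z \<in> I \<and> inverse (p^2) * z \<in> I \<and> inverse z \<in> I"
    and M_mod: "thetaR_module p q I m sc G e x s pi1"
    and M_fd: "fin_dim sc"
    and M_irr: "irreducible_graded I m sc G e x s pi1"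
    and i_seq: "i \<in> seqs I m"
  shows "in_vZv2 (gdim sc G (range (e i))) \<or> in_Zv2 (gdim sc G (range (e i)))"
proof -
  interpret thetaR_graded_module p q I m sc G e x s pi1
    using M_mod I_sub(1) I_stable by unfold_locales blast+
  obtain v :: 'v where "v \<noteq> 0"
    using M_irr unfolding irreducible_graded_def by blast
  then obtain j d w where j: "j \<in> seqs I m" and w: "w \<in> G d" "e j w = w" "w \<noteq> 0"
    using thetaR_module_e_sum[OF M_mod]
    by (elim exists_homogeneous_fixed_vector[of v "{i\<in>seqs I m. e i \<noteq> (\<lambda>v. 0)}"]) blast+
  define \<epsilon> where "\<epsilon> = even (d + seq_weight p q j)"
  have "w \<in> parity_subspace (seq_weight p q) \<epsilon>"
    unfolding \<epsilon>_def by (rule homogeneous_fixed_in_parity_subspace[OF j w(1,2)])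
  with w(3) have everything: "parity_subspace (seq_weight p q) \<epsilon> = UNIV"
    using M_irr graded_submodule_parity_subspace unfolding irreducible_graded_def by blast
  have "gdim sc G (range (e i)) d' = 0" if "even d' \<noteq> (\<epsilon> \<longleftrightarrow> even (seq_weight p q i))" for d'
    by (rule gdim_idem_vanishes[OF everything i_seq]) (use that in auto)
  then show ?thesis
    by (rule in_vZv2_or_in_Zv2[OF finite_gdim_support[OF M_fd]])
qed

end
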